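(* Fix $N\in\mathbb{N}$ and $\sigma^2>0$, and put $c_{\sigma^2}(t)=\sigma^2/(\sigma^2+t)$ for $t\in[0,\infty)$. (i) Let $(\Xi(t))_{t\ge 0}$ be the noncolliding Brownian motion whose initial configuration is random with density $\mu^{(1)}_{N,\sigma^2}$. Let $(\Xi_{\sigma^2}(t))_{t\in[0,\sigma^2]}$ be the noncolliding Brownian motion with duration $T=\sigma^2$ started from $N\delta_0$. Then the following two processes are equivalent, i.e. they have the same finite-dimensional distributions: $$(\Xi(t))_{t\ge0}\qquad\text{and}\qquad \Big(\tfrac{1}{c_{\sigma^2}(t)}\circ \Xi_{\sigma^2}\big(\sigma^2 c_{\sigma^2}(t)\big)\Big)_{t\ge 0}.$$ (ii) Let $\nu>-1$, $a\in(-1,\nu]$ and $\kappa=2(\nu-a)$, so that $a=\nu-\kappa/2$. Let $(\Xi^{(\nu)}(t))_{t\ge0}$ be the noncolliding squared Bessel process with index $\nu$ whose initial configuration is random with density $\mu^{(1,a)}_{N,\sigma^2}$. Let $(\Xi^{(\nu,\kappa)}_{\sigma^2}(t))_{t\in[0,\sigma^2]}$ be the noncolliding squared generalized meander with duration $T=\sigma^2$ started from $N\delta_0$. Then the following two processes are equivalent: $$(\Xi^{(\nu)}(t))_{t\ge0}\qquad\text{and}\qquad \Big(\tfrac{1}{c_{\sigma^2}(t)^2}\circ \Xi^{(\nu,\kappa)}_{\sigma^2}\big(\sigma^2 c_{\sigma^2}(t)\big)\Big)_{t\ge 0}.$$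
   Context: Configurations and notation. - A configuration of $N$ particles is $\xi=\sum_{j=1}^N\delta_{x_j}$; it is identified with the ordered vector $\mathbf{x}=(x_1,\dots,x_N)$. - For $c>0$ the dilatation is $c\circ\xi=\sum_j\delta_{cx_j}$, and $c\mathbf{x}=(cx_1,\dots,cx_N)$. - $\mathbb{W}_N^{A}=\{\mathbf{x}\in\mathbb{R}^N:x_1<\dots<x_N\}$ and $\mathbb{W}_N^{+}=\{\mathbf{x}:0\le x_1<\dots<x_N\}$. - $h_N(\mathbf{x})=\prod_{1\le j<k\le N}(x_k-x_j)$ and $|\mathbf{x}|^2=\sum_j x_j^2$. - Two processes with the same state space are equivalent if, for every $M$ and all times $0<t_1<\dots<t_M$, their multitime joint probability densities coincide. Transition densities. - Brownian motion: $p(t,y|x)=(2\pi t)^{-1/2}e^{-(x-y)^2/2t}$ for $t>0$, and $p(0,y|x)=\delta(y-x)$. - Squared Bessel process: for $t>0$, $$p^{(\nu)}(t,y|x)=\frac{1}{2t}\Big(\frac yx\Big)^{\nu/2}e^{-(x+y)/2t}I_\nu\Big(\frac{\sqrt{xy}}{t}\Big)\quad (x>0),\qquad p^{(\nu)}(t,y|0)=\frac{y^\nu e^{-y/2t}}{(2t)^{\nu+1}\Gamma(\nu+1)},$$ and $p^{(\nu)}(0,y|x)=\delta(y-x)$. Here $I_\nu(z)=\sum_{n\ge0}(z/2)^{2n+\nu}/\{\Gamma(n+1)\Gamma(n+1+\nu)\}$. - Generalized meander: for $t>0$, $$p^{(\nu,\kappa)}(t,y|x)=\frac{1}{2t}\Big(\frac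 yx\Big)^{(\nu-\kappa)/2}e^{-(x+y)/2t}I_\nu\Big(\frac{\sqrt{xy}}{t}\Big)\quad(x>0,\ y\ge0),\qquad p^{(\nu,\kappa)}(t,y|0)=\frac{y^{\nu-\kappa/2}e^{-y/2t}}{(2t)^{\nu+1}\Gamma(\nu+1)},$$ and $p^{(\nu,\kappa)}(0,y|x)=\delta(y-x)$. - Write $f(t,\mathbf{y}|\mathbf{x})=\det_{j,k}[p(t,y_j|x_k)]$, and define $f^{(\nu)}$ and $f^{(\nu,\kappa)}$ analogously from $p^{(\nu)}$ and $p^{(\nu,\kappa)}$. Noncolliding Brownian motion started from a fixed $\xi$ with $\mathbf{x}\in\mathbb{W}_N^A$. This is the temporally homogeneous process whose multitime joint density, for $0<t_1<\dots<t_M$ and $\mathbf{x}^{(m)}\in\mathbb{W}_N^A$, is $$p^\xi(t_1,\mathbf{x}^{(1)};\dots;t_M,\mathbf{x}^{(M)})=h_N(\mathbf{x}^{(M)})\prod_{m=1}^{M-1}f(t_{m+1}-t_m,\mathbf{x}^{(m+1)}|\mathbf{x}^{(m)})\,\frac{f(t_1,\mathbf{x}^{(1)}|\mathbf{x})}{h_N(\mathbf{x})}.$$ The noncolliding squared Bessel process with index $\nu$ ($\nu>-1$) started from $\mathbf{x}\in\mathbb{W}_N^+$ is defined by the same formula with $p,f$ replaced by $p^{(\nu)},f^{(\nu)}$ and $\mathbb{W}_N^A$ replaced by $\mathbb{W}_N^+$. Starting from a random initial configuration with density $\mu$ means mixing these densities against $\mu(\xi)\,d\mathbf{x}$. Initial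 distributions. - $\mu^{(1)}_{N,\sigma^2}(\xi)=\dfrac{\sigma^{-N(N+1)/2}}{C_N^{(1)}}e^{-|\mathbf{x}|^2/2\sigma^2}|h_N(\mathbf{x})|$ on $\mathbb{W}_N^A$, where $C_N^{(1)}=\dfrac{(2\pi)^{N/2}}{N!}\prod_{j=1}^N\dfrac{\Gamma(j/2+1)}{\Gamma(3/2)}$. This is the GOE eigenvalue density with variance $\sigma^2$. - $\mu^{(1,a)}_{N,\sigma^2}(\xi)=\dfrac{\sigma^{-N\{(N-1)+2(a+1)\}}}{C_N^{(1,a)}}\prod_{j=1}^N x_j^ae^{-x_j/2\sigma^2}\,|h_N(\mathbf{x})|$ on $\mathbb{W}_N^+$, where $C_N^{(1,a)}=\dfrac{2^{N\{(N-1)+2(a+1)\}/2}}{N!}\prod_{j=1}^N\dfrac{\Gamma(j/2+1)\Gamma(j/2+a+1/2)}{\Gamma(3/2)}$. Noncolliding Brownian motion with duration $T>0$ started from $N\delta_0$. This is the temporally inhomogeneous process on $[0,T]$ whose multitime density, for $0<t_1<\dots<t_M<t_{M+1}\equiv T$ and $\mathbf{x}^{(m)}\in\mathbb{W}_N^A$, is $$C_{N,T}(t_1)\,\mathrm{sgn}(h_N(\mathbf{x}^{(M+1)}))\prod_{m=1}^M f(t_{m+1}-t_m,\mathbf{x}^{(m+1)}|\mathbf{x}^{(m)})\,h_N(\mathbf{x}^{(1)})\prod_{j=1}^N p(t_1,x^{(1)}_j|0),$$ where $C_{N,T}(t)=\pi^{N/2}\{\prod_{j=1}^N\Gamma(j/2)\}^{-1}T^{N(N-1)/4}t^{-N(N-1)/2}$.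 Noncolliding squared generalized meander with duration $T$ started from $N\delta_0$ ($\nu>-1$, $\kappa\in[0,2(\nu+1))$). This is defined by the same formula with $p,f$ replaced by $p^{(\nu,\kappa)},f^{(\nu,\kappa)}$, with $\mathbb{W}_N^+$ in place of $\mathbb{W}_N^A$, and with constant $$C^{(\nu,\kappa)}_{N,T}(t)=\frac{T^{(N+\kappa-1)N/2}t^{-(N-1)N}}{2^{N(N-\kappa-1)/2}}\prod_{j=1}^N\frac{\Gamma(\nu+1)\Gamma(1/2)}{\Gamma(j/2)\Gamma((j+1+2\nu-\kappa)/2)}.$$ *)

theory Defs
  imports "HOL-Analysis.Analysis"
begin

text \<open>A configuration of N
  particles is an ordered vector x = (x_0,...,x_{N-1}), represented as a function
  nat => real whose relevant entries are those with index < N.  Multitime data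
  (M times, M configurations) are given as ts :: nat => real (ts m, m < M) and
  xs :: nat => nat => real (xs m = configuration at time ts m).\<close>

definition lebN :: "nat \<Rightarrow> (nat \<Rightarrow> real) measure" where
  "lebN N = PiM {..<N} (\<lambda>_. lborel)"

definition weylA :: "nat \<Rightarrow> (nat \<Rightarrow> real) set" where
  "weylA N = {x. \<forall>j. Suc j < N \<longrightarrow> x j < x (Suc j)}"

definition weylPlus :: "nat \<Rightarrow> (nat \<Rightarrow> real) set" where
  "weylPlus N = {x. 0 \<le> x 0 \<and> (\<forall>j. Suc j < N \<longrightarrow> x j < x (Suc j))}"

text \<open>Open positive chamber 0 < x_1 < ... < x_N (full-measure part of W_N^+).\<close>
definition weylPos :: "nat \<Rightarrow> (nat \<Rightarrow> real) set" where
  "weylPos N = {x. 0 < x 0 \<and> (\<forall>j. Suc j < N \<longrightarrow> x j < x (Suc j))}"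

definition vdm :: "nat \<Rightarrow> (nat \<Rightarrow> real) \<Rightarrow> real" where
  "vdm N x = (\<Prod>k<N. \<Prod>j<k. (x k - x j))"

definition sqnorm :: "nat \<Rightarrow> (nat \<Rightarrow> real) \<Rightarrow> real" where
  "sqnorm N x = (\<Sum>j<N. (x j)\<^sup>2)"

definition detN :: "nat \<Rightarrow> (nat \<Rightarrow> nat \<Rightarrow> real) \<Rightarrow> real" where
  "detN N A = (\<Sum>p | p permutes {..<N}. of_int (sign p) * (\<Prod>i<N. A i (p i)))"

definition besselI :: "real \<Rightarrow> real \<Rightarrow> real" where
  "besselI \<nu> z = (\<Sum>n. (z / 2) powr (2 * real n + \<nu>) / (Gamma (real n + 1) * Gamma (real n + 1 + \<nu>)))"

text \<open>Transition densities p(t,y|x), for t > 0.\<close>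
definition pBM :: "real \<Rightarrow> real \<Rightarrow> real \<Rightarrow> real" where
  "pBM t y x = exp (- (x - y)\<^sup>2 / (2 * t)) / sqrt (2 * pi * t)"

definition pBES :: "real \<Rightarrow> real \<Rightarrow> real \<Rightarrow> real \<Rightarrow> real" where
  "pBES \<nu> t y x =
     (if x = 0 then y powr \<nu> * exp (- y / (2 * t)) / ((2 * t) powr (\<nu> + 1) * Gamma (\<nu> + 1))
      else 1 / (2 * t) * (y / x) powr (\<nu> / 2) * exp (- (x + y) / (2 * t))
             * besselI \<nu> (sqrt (x * y) / t))"

definition pMEA :: "real \<Rightarrow> real \<Rightarrow> real \<Rightarrow> real \<Rightarrow> real \<Rightarrow> real" where
  "pMEA \<nu> \<kappa> t y x =
     (if x = 0 then y powr (\<nu> - \<kappa> / 2) * exp (- y / (2 * t)) / ((2 * t) powr (\<nu> + 1) * Gamma (\<nu> + 1))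
      else 1 / (2 * t) * (y / x) powr ((\<nu> - \<kappa>) / 2) * exp (- (x + y) / (2 * t))
             * besselI \<nu> (sqrt (x * y) / t))"

definition transDet :: "nat \<Rightarrow> (real \<Rightarrow> real \<Rightarrow> real \<Rightarrow> real) \<Rightarrow> real
                        \<Rightarrow> (nat \<Rightarrow> real) \<Rightarrow> (nat \<Rightarrow> real) \<Rightarrow> real" where
  "transDet N p t y x = detN N (\<lambda>j k. p t (y j) (x k))"

text \<open>Multitime density (times ts 0 < ... < ts (M-1), configurations xs 0, ..., xs (M-1))
  of the temporally homogeneous noncolliding process with kernel p started from the
  fixed configuration x.\<close>
definition homDensity :: "nat \<Rightarrow> (real \<Rightarrow> real \<Rightarrow> real \<Rightarrow> real) \<Rightarrow> nat \<Rightarrow> (nat \<Rightarrow> real)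
                          \<Rightarrow> (nat \<Rightarrow> nat \<Rightarrow> real) \<Rightarrow> (nat \<Rightarrow> real) \<Rightarrow> real" where
  "homDensity N p M ts xs x =
     vdm N (xs (M - 1))
     * (\<Prod>m<M - 1. transDet N p (ts (Suc m) - ts m) (xs (Suc m)) (xs m))
     * transDet N p (ts 0) (xs 0) x / vdm N x"

text \<open>Same process, random initial configuration with density mu on the chamber W.\<close>
definition mixedHomDensity :: "nat \<Rightarrow> (real \<Rightarrow> real \<Rightarrow> real \<Rightarrow> real) \<Rightarrow> (nat \<Rightarrow> real) set
          \<Rightarrow> ((nat \<Rightarrow> real) \<Rightarrow> real) \<Rightarrow> nat \<Rightarrow> (nat \<Rightarrow> real) \<Rightarrow> (nat \<Rightarrow> nat \<Rightarrow> real) \<Rightarrow> real" where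
  "mixedHomDensity N p W \<mu> M ts xs =
     (LINT x:W|lebN N. \<mu> x * homDensity N p M ts xs x)"

text \<open>Multitime density at times 0 < ts 0 < ... < ts (M-1) < T of the noncolliding process
  with duration T, kernel p, constant C, chamber W, started from N delta_0.  The last
  configuration x^(M+1) at the terminal time t_{M+1} = T is integrated out over W.\<close>
definition durDensity :: "nat \<Rightarrow> (real \<Rightarrow> real \<Rightarrow> real \<Rightarrow> real) \<Rightarrow> (real \<Rightarrow> real) \<Rightarrow> (nat \<Rightarrow> real) set
          \<Rightarrow> real \<Rightarrow> nat \<Rightarrow> (nat \<Rightarrow> real) \<Rightarrow> (nat \<Rightarrow> nat \<Rightarrow> real) \<Rightarrow> real" where
  "durDensity N p C W T M ts xs =
     C (ts 0) * (LINT z:W|lebN N.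
        sgn (vdm N z)
        * (\<Prod>m<M. transDet N p ((if Suc m < M then ts (Suc m) else T) - ts m)
                                  (if Suc m < M then xs (Suc m) else z) (xs m))
        * vdm N (xs 0) * (\<Prod>j<N. p (ts 0) (xs 0 j) 0))"

definition CBM :: "nat \<Rightarrow> real \<Rightarrow> real \<Rightarrow> real" where
  "CBM N T t = pi powr (real N / 2) / (\<Prod>j=1..N. Gamma (real j / 2))
               * T powr (real N * (real N - 1) / 4) * t powr (- (real N * (real N - 1) / 2))"

definition CMEA :: "nat \<Rightarrow> real \<Rightarrow> real \<Rightarrow> real \<Rightarrow> real \<Rightarrow> real" where
  "CMEA N \<nu> \<kappa> T t = T powr ((real N + \<kappa> - 1) * real N / 2) * t powr (- ((real N - 1) * real N))
        / 2 powr (real N * (real N - \<kappa> - 1) / 2)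
        * (\<Prod>j=1..N. Gamma (\<nu> + 1) * Gamma (1 / 2)
                      / (Gamma (real j / 2) * Gamma ((real j + 1 + 2 * \<nu> - \<kappa>) / 2)))"

definition CGOE :: "nat \<Rightarrow> real" where
  "CGOE N = (2 * pi) powr (real N / 2) / fact N
            * (\<Prod>j=1..N. Gamma (real j / 2 + 1) / Gamma (3 / 2))"

definition muGOE :: "nat \<Rightarrow> real \<Rightarrow> (nat \<Rightarrow> real) \<Rightarrow> real" where
  "muGOE N \<sigma>2 x = sqrt \<sigma>2 powr (- (real N * (real N + 1) / 2)) / CGOE N
                  * exp (- sqnorm N x / (2 * \<sigma>2)) * \<bar>vdm N x\<bar>"

definition CLOE :: "nat \<Rightarrow> real \<Rightarrow> real" where
  "CLOE N a = 2 powr (real N * ((real N - 1) + 2 * (a + 1)) / 2) / fact N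
              * (\<Prod>j=1..N. Gamma (real j / 2 + 1) * Gamma (real j / 2 + a + 1 / 2) / Gamma (3 / 2))"

definition muLOE :: "nat \<Rightarrow> real \<Rightarrow> real \<Rightarrow> (nat \<Rightarrow> real) \<Rightarrow> real" where
  "muLOE N \<sigma>2 a x = sqrt \<sigma>2 powr (- (real N * ((real N - 1) + 2 * (a + 1)))) / CLOE N a
                    * (\<Prod>j<N. x j powr a * exp (- x j / (2 * \<sigma>2))) * \<bar>vdm N x\<bar>"

definition cfun :: "real \<Rightarrow> real \<Rightarrow> real" where
  "cfun \<sigma>2 t = \<sigma>2 / (\<sigma>2 + t)"

text \<open>Multitime density of the process t |-> (1 / c(t)^k) o Y(sigma^2 c(t)), where Y has
  multitime density P (for increasing times).  Since s = sigma^2 c(t) is decreasing in t,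
  the times are reversed; y = c^k z in R^N has Jacobian c^(kN).\<close>
definition timeChangedDensity :: "nat \<Rightarrow> real \<Rightarrow> nat
     \<Rightarrow> (nat \<Rightarrow> (nat \<Rightarrow> real) \<Rightarrow> (nat \<Rightarrow> nat \<Rightarrow> real) \<Rightarrow> real)
     \<Rightarrow> nat \<Rightarrow> (nat \<Rightarrow> real) \<Rightarrow> (nat \<Rightarrow> nat \<Rightarrow> real) \<Rightarrow> real" where
  "timeChangedDensity N \<sigma>2 k P M ts xs =
     (\<Prod>m<M. cfun \<sigma>2 (ts m) ^ (k * N))
     * P M (\<lambda>m. \<sigma>2 * cfun \<sigma>2 (ts (M - 1 - m)))
           (\<lambda>m j. cfun \<sigma>2 (ts (M - 1 - m)) ^ k * xs (M - 1 - m) j)"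

end

theory Submission
  imports Defs
begin

text \<open>Write \<open>c(t) = \<sigma>\<^sup>2 / (\<sigma>\<^sup>2 + t)\<close>. Everything rests on a one-particle identity: multiplying
  the homogeneous kernel \<open>p(t' - t, y' | y)\<close> by a weight \<open>w(t, y)\<close> (the Gaussian
  \<open>exp (- y\<^sup>2 / 2(\<sigma>\<^sup>2 + t))\<close>, resp. \<open>y\<^sup>a exp (- y / 2(\<sigma>\<^sup>2 + t))\<close>) and dividing by \<open>w(t', y')\<close>
  gives, up to powers of \<open>c(t)\<close> and \<open>c(t')\<close>, the kernel of the process with duration \<open>\<sigma>\<^sup>2\<close>
  from time \<open>\<sigma>\<^sup>2 c(t')\<close> to \<open>\<sigma>\<^sup>2 c(t)\<close>, evaluated at the rescaled points \<open>c(t')\<^sup>k y'\<close> and \<open>c(t)\<^sup>k y\<close>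
  (completing the square, resp. the same for the Bessel kernel, whose argument
  \<open>\<surd>(y y') / (t' - t)\<close> is invariant). By multilinearity this passes to the Karlin-McGregor
  determinants. Along a multitime chain the weights and powers of \<open>c\<close> telescope; the initial
  weight, which is the non-Vandermonde part of the initial density \<open>\<mu>\<close>, turns the first kernel
  into the last kernel of the duration process, so that integrating over the random initial
  configuration becomes integrating out the terminal configuration at time \<open>\<sigma>\<^sup>2\<close>. What remains
  is the scaling of the Vandermonde determinant and an identity between normalising constants,
  checked on logarithms.\<close>

lemma detN_cong:
  assumes "\<And>j k. j < N \<Longrightarrow> k < N \<Longrightarrow> A j k = B j k"
  shows "detN N A = detN N B"
  unfolding detN_def
proof (rule sum.cong[OF refl])
  fix p assume "p \<in> {p. p permutes {..<N}}"
  then show "of_int (sign p) * (\<Prod>i<N. A i (p i)) = of_int (sign p) * (\<Prod>i<N. B i (p i))"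
    using assms permutes_in_image[of p "{..<N}"] by (auto intro!: prod.cong)
qed

lemma detN_transpose: "detN N (\<lambda>j k. A k j) = detN N A"
proof -
  have "detN N (\<lambda>j k. A k j) = (\<Sum>p | p permutes {..<N}. of_int (sign (inv p)) * (\<Prod>i<N. A (inv p i) i))"
    unfolding detN_def by (subst sum_permutations_inverse) simp
  also have "\<dots> = detN N A"
    unfolding detN_def
  proof (rule sum.cong[OF refl])
    fix p assume "p \<in> {p. p permutes {..<N}}"
    then have p: "p permutes {..<N}" by simp
    have "(\<Prod>i<N. A (inv p i) i) = (\<Prod>i<N. A (inv p (p i)) (p i))"
      using prod.permute[OF p, of "\<lambda>i. A (inv p i) i"] by simp
    also have "\<dots> = (\<Prod>i<N. A i (p i))"
      using permutes_inverses(2)[OF p] by simp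
    finally show "of_int (sign (inv p)) * (\<Prod>i<N. A (inv p i) i) = of_int (sign p) * (\<Prod>i<N. A i (p i))"
      using sign_inverse[OF permutation_permutes[THEN iffD2]] p by auto
  qed
  finally show ?thesis .
qed

lemma detN_scale:
  "detN N (\<lambda>j k. r j * s k * A j k) = (\<Prod>j<N. r j) * (\<Prod>k<N. s k) * detN N A"
  unfolding detN_def sum_distrib_left
proof (rule sum.cong[OF refl])
  fix p assume "p \<in> {p. p permutes {..<N}}"
  then have "(\<Prod>i<N. s (p i)) = (\<Prod>k<N. s k)"
    using prod.permute[of p "{..<N}" s] by simp
  then show "of_int (sign p) * (\<Prod>i<N. r i * s (p i) * A i (p i))
      = (\<Prod>j<N. r j) * (\<Prod>k<N. s k) * (of_int (sign p) * (\<Prod>i<N. A i (p i)))"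
    by (simp add: prod.distrib ac_simps)
qed

lemma transDet_rescale:
  assumes "\<And>j k. j < N \<Longrightarrow> k < N \<Longrightarrow>
             u j * v k * p t (y j) (x k) = u' j * v' k * q t' (x' k) (y' j)"
  shows "(\<Prod>j<N. u j) * (\<Prod>k<N. v k) * transDet N p t y x
       = (\<Prod>j<N. u' j) * (\<Prod>k<N. v' k) * transDet N q t' x' y'"
proof -
  have "(\<Prod>j<N. u j) * (\<Prod>k<N. v k) * transDet N p t y x
      = detN N (\<lambda>j k. u j * v k * p t (y j) (x k))"
    unfolding transDet_def by (rule detN_scale[symmetric])
  also have "\<dots> = detN N (\<lambda>j k. u' j * v' k * q t' (x' k) (y' j))"
    by (rule detN_cong) (rule assms)
  also have "\<dots> = (\<Prod>j<N. u' j) * (\<Prod>k<N. v' k) * detN N (\<lambda>j k. q t' (x' k) (y' j))"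
    by (rule detN_scale)
  also have "detN N (\<lambda>j k. q t' (x' k) (y' j)) = transDet N q t' x' y'"
    unfolding transDet_def by (rule detN_transpose)
  finally show ?thesis .
qed

lemma abs_mult_divide_self: "\<bar>v\<bar> * (a / v) = sgn v * (a :: 'a :: linordered_field)"
  by (cases "v = 0") (auto simp: sgn_if)

lemma vdm_scale:
  assumes "0 < c"
  shows "vdm N (\<lambda>i. c * y i) = c powr (real N * (real N - 1) / 2) * vdm N y"
proof -
  have sum_lessThan: "(\<Sum>k<N. real k) = real N * (real N - 1) / 2"
    by (induction N) (auto simp: field_simps)
  have "vdm N (\<lambda>i. c * y i) = (\<Prod>k<N. c ^ k) * vdm N y"
    unfolding vdm_def by (simp add: right_diff_distrib[symmetric] prod.distrib)
  also have "(\<Prod>k<N. c ^ k) = c powr (\<Sum>k<N. real k)"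
    using assms by (simp add: powr_sum powr_realpow)
  finally show ?thesis
    unfolding sum_lessThan .
qed

lemma prod_lessThan_telescope_mult:
  assumes "\<And>m. m < n \<Longrightarrow> a m * T m = b m * a (Suc m)"
  shows "a 0 * (\<Prod>m<n. T m) = (\<Prod>m<n. b m) * (a n :: 'a :: comm_monoid_mult)"
  using assms
proof (induction n)
  case (Suc n)
  have IH: "a 0 * (\<Prod>m<n. T m) = (\<Prod>m<n. b m) * a n"
    using Suc by simp
  have "a 0 * (\<Prod>m<Suc n. T m) = (a 0 * (\<Prod>m<n. T m)) * T n"
    by (simp add: mult.assoc)
  also have "\<dots> = (\<Prod>m<n. b m) * (a n * T n)"
    unfolding IH by (simp add: mult.assoc)
  also have "\<dots> = (\<Prod>m<Suc n. b m) * a (Suc n)"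
    using Suc.prems[of n] by (simp add: ac_simps)
  finally show ?case .
qed simp

lemma cfun_pos: "0 < s \<Longrightarrow> 0 \<le> t \<Longrightarrow> 0 < cfun s t"
  unfolding cfun_def by simp

lemma cfun_zero: "0 < s \<Longrightarrow> cfun s 0 = 1"
  unfolding cfun_def by simp

lemma cfun_diff: "0 < s \<Longrightarrow> 0 \<le> t \<Longrightarrow> 0 \<le> t' \<Longrightarrow> s * cfun s t - s * cfun s t' = cfun s t * cfun s t' * (t' - t)"
  unfolding cfun_def by (simp add: field_simps)

lemma increasing_times_pos:
  assumes "0 < ts 0" "\<forall>m<n. ts m < ts (Suc m)" "m \<le> n"
  shows "0 < (ts m :: real)"
  using assms(3)
proof (induction m)
  case (Suc m)
  then have "0 < ts m"
    by simp
  also have "ts m < ts (Suc m)"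
    using assms(2) Suc.prems by simp
  finally show ?case .
qed (use assms(1) in simp)

lemma transDet_chain_time_reversal:
  "(\<Prod>m<Suc n. transDet N q ((if Suc m < Suc n then s * c (n - Suc m) else s) - s * c (n - m))
       (if Suc m < Suc n then (\<lambda>i. c (n - Suc m) ^ k * xs (n - Suc m) i) else z)
       (\<lambda>i. c (n - m) ^ k * xs (n - m) i))
   = (\<Prod>m<n. transDet N q (s * c m - s * c (Suc m)) (\<lambda>i. c m ^ k * xs m i) (\<lambda>i. c (Suc m) ^ k * xs (Suc m) i))
     * transDet N q (s - s * c 0) z (\<lambda>i. c 0 ^ k * xs 0 i)"
proof -
  let ?g = "\<lambda>m. transDet N q (s * c m - s * c (Suc m)) (\<lambda>i. c m ^ k * xs m i) (\<lambda>i. c (Suc m) ^ k * xs (Suc m) i)"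
  have "(\<Prod>m<n. transDet N q (s * c (n - Suc m) - s * c (n - m))
          (\<lambda>i. c (n - Suc m) ^ k * xs (n - Suc m) i) (\<lambda>i. c (n - m) ^ k * xs (n - m) i))
      = (\<Prod>m<n. ?g (n - Suc m))"
    by (rule prod.cong) (auto simp: Suc_diff_Suc)
  also have "\<dots> = (\<Prod>m<n. ?g m)"
    by (rule prod.nat_diff_reindex)
  finally show ?thesis
    by simp
qed

lemma timeChangedDensity_durDensity_forward:
  "timeChangedDensity N s k (durDensity N q C W s) (Suc n) ts xs
    = (\<Prod>m<Suc n. cfun s (ts m) ^ (k * N)) * C (s * cfun s (ts n))
      * (LINT z:W|lebN N. sgn (vdm N z)
          * (\<Prod>m<n. transDet N q (s * cfun s (ts m) - s * cfun s (ts (Suc m)))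
               (\<lambda>i. cfun s (ts m) ^ k * xs m i) (\<lambda>i. cfun s (ts (Suc m)) ^ k * xs (Suc m) i))
          * transDet N q (s - s * cfun s (ts 0)) z (\<lambda>i. cfun s (ts 0) ^ k * xs 0 i)
          * vdm N (\<lambda>i. cfun s (ts n) ^ k * xs n i)
          * (\<Prod>i<N. q (s * cfun s (ts n)) (cfun s (ts n) ^ k * xs n i) 0))"
  unfolding timeChangedDensity_def durDensity_def diff_Suc_1
    transDet_chain_time_reversal[where c = "\<lambda>m. cfun s (ts m)"]
  by (simp add: mult.assoc)

text \<open>Kernels are read as (time, target, source); \<open>p\<close> is the homogeneous kernel, \<open>q\<close> the
  kernel of the process with duration \<open>s\<close>, \<open>w t y\<close> the one-particle weight at time \<open>t\<close>, and
  points are rescaled by \<open>y \<mapsto> cfun s t ^ k * y\<close>.\<close>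

locale time_inversion =
  fixes s :: real and k :: nat
    and p q :: "real \<Rightarrow> real \<Rightarrow> real \<Rightarrow> real"
    and w :: "real \<Rightarrow> real \<Rightarrow> real"
    and lam phi :: "real \<Rightarrow> real"
    and Y X0 :: "real set"
  assumes s_pos: "0 < s"
    and kernel_step: "\<And>t t' y y'. 0 < t \<Longrightarrow> t < t' \<Longrightarrow> y \<in> Y \<Longrightarrow> y' \<in> Y \<Longrightarrow>
      lam (cfun s t) * w t y * p (t' - t) y' y
      = cfun s t ^ k * lam (cfun s t') * w t' y'
        * q (s * cfun s t - s * cfun s t') (cfun s t ^ k * y) (cfun s t' ^ k * y')"
    and kernel_start: "\<And>t x y. 0 < t \<Longrightarrow> x \<in> X0 \<Longrightarrow> y \<in> Y \<Longrightarrow>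
      w 0 x * p t y x = lam (cfun s t) * w t y * q (s - s * cfun s t) x (cfun s t ^ k * y)"
    and kernel_end: "\<And>t y. 0 < t \<Longrightarrow> y \<in> Y \<Longrightarrow>
      q (s * cfun s t) (cfun s t ^ k * y) 0 = phi (cfun s t) * w t y"
begin

lemma transDet_step:
  assumes "0 < t" "t < t'" "\<And>i. i < N \<Longrightarrow> y i \<in> Y" "\<And>i. i < N \<Longrightarrow> y' i \<in> Y"
  shows "lam (cfun s t) ^ N * (\<Prod>i<N. w t (y i)) * transDet N p (t' - t) y' y
    = (cfun s t ^ k * lam (cfun s t')) ^ N * (\<Prod>i<N. w t' (y' i))
      * transDet N q (s * cfun s t - s * cfun s t') (\<lambda>i. cfun s t ^ k * y i) (\<lambda>i. cfun s t' ^ k * y' i)"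
proof -
  have "(\<Prod>j<N. 1) * (\<Prod>i<N. lam (cfun s t) * w t (y i)) * transDet N p (t' - t) y' y
    = (\<Prod>j<N. cfun s t ^ k * lam (cfun s t') * w t' (y' j)) * (\<Prod>i<N. 1)
      * transDet N q (s * cfun s t - s * cfun s t') (\<lambda>i. cfun s t ^ k * y i) (\<lambda>i. cfun s t' ^ k * y' i)"
    by (rule transDet_rescale) (simp add: kernel_step assms)
  then show ?thesis
    by (simp add: prod.distrib)
qed

lemma transDet_start:
  assumes "0 < t" "\<And>i. i < N \<Longrightarrow> x i \<in> X0" "\<And>i. i < N \<Longrightarrow> y i \<in> Y"
  shows "(\<Prod>i<N. w 0 (x i)) * transDet N p t y x
    = lam (cfun s t) ^ N * (\<Prod>i<N. w t (y i)) * transDet N q (s - s * cfun s t) x (\<lambda>i. cfun s t ^ k * y i)"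
proof -
  have "(\<Prod>j<N. 1) * (\<Prod>i<N. w 0 (x i)) * transDet N p t y x
    = (\<Prod>j<N. lam (cfun s t) * w t (y j)) * (\<Prod>i<N. 1) * transDet N q (s - s * cfun s t) x (\<lambda>i. cfun s t ^ k * y i)"
    by (rule transDet_rescale) (simp add: kernel_start assms)
  then show ?thesis
    by (simp add: prod.distrib)
qed

lemma prod_kernel_end:
  assumes "0 < t" "\<And>i. i < N \<Longrightarrow> y i \<in> Y"
  shows "(\<Prod>i<N. q (s * cfun s t) (cfun s t ^ k * y i) 0) = phi (cfun s t) ^ N * (\<Prod>i<N. w t (y i))"
  by (simp add: kernel_end assms prod.distrib)

lemma homogeneous_chain_conjugate:
  assumes "0 < ts 0" "\<forall>m<n. ts m < ts (Suc m)"
    and "\<forall>m\<le>n. \<forall>i<N. xs m i \<in> Y" "\<forall>i<N. x i \<in> X0"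
  shows "(\<Prod>i<N. w 0 (x i)) * transDet N p (ts 0) (xs 0) x
      * (\<Prod>m<n. transDet N p (ts (Suc m) - ts m) (xs (Suc m)) (xs m))
    = (\<Prod>m<n. cfun s (ts m) ^ (k * N)) * lam (cfun s (ts n)) ^ N * (\<Prod>i<N. w (ts n) (xs n i))
      * (\<Prod>m<n. transDet N q (s * cfun s (ts m) - s * cfun s (ts (Suc m)))
           (\<lambda>i. cfun s (ts m) ^ k * xs m i) (\<lambda>i. cfun s (ts (Suc m)) ^ k * xs (Suc m) i))
      * transDet N q (s - s * cfun s (ts 0)) x (\<lambda>i. cfun s (ts 0) ^ k * xs 0 i)"
proof -
  define a where "a m = lam (cfun s (ts m)) ^ N * (\<Prod>i<N. w (ts m) (xs m i))" for m
  have ts_pos: "0 < ts m" if "m \<le> n" for m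
    using increasing_times_pos[OF assms(1,2) that] .
  have "a 0 * (\<Prod>m<n. transDet N p (ts (Suc m) - ts m) (xs (Suc m)) (xs m))
      = (\<Prod>m<n. cfun s (ts m) ^ (k * N) * transDet N q (s * cfun s (ts m) - s * cfun s (ts (Suc m)))
           (\<lambda>i. cfun s (ts m) ^ k * xs m i) (\<lambda>i. cfun s (ts (Suc m)) ^ k * xs (Suc m) i)) * a n"
  proof (rule prod_lessThan_telescope_mult)
    fix m assume "m < n"
    then show "a m * transDet N p (ts (Suc m) - ts m) (xs (Suc m)) (xs m)
        = cfun s (ts m) ^ (k * N) * transDet N q (s * cfun s (ts m) - s * cfun s (ts (Suc m)))
           (\<lambda>i. cfun s (ts m) ^ k * xs m i) (\<lambda>i. cfun s (ts (Suc m)) ^ k * xs (Suc m) i) * a (Suc m)"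
      using transDet_step[of "ts m" "ts (Suc m)" N "xs m" "xs (Suc m)"] ts_pos assms(2,3)
      unfolding a_def power_mult by (simp add: power_mult_distrib ac_simps)
  qed
  moreover have "(\<Prod>i<N. w 0 (x i)) * transDet N p (ts 0) (xs 0) x
      = a 0 * transDet N q (s - s * cfun s (ts 0)) x (\<lambda>i. cfun s (ts 0) ^ k * xs 0 i)"
    using transDet_start[of "ts 0" N x "xs 0"] assms(1,3,4) unfolding a_def by simp
  ultimately show ?thesis
    unfolding a_def by (simp add: prod.distrib ac_simps)
qed

lemma weighted_homDensity_eq:
  assumes const: "\<And>c. 0 < c \<Longrightarrow> K * lam c ^ N
      = C (s * c) * c ^ (k * N) * (c ^ k) powr (real N * (real N - 1) / 2) * phi c ^ N"
    and ts: "0 < ts 0" "\<forall>m<n. ts m < ts (Suc m)"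
    and Y: "\<forall>m\<le>n. \<forall>i<N. xs m i \<in> Y" and X0: "\<forall>i<N. x i \<in> X0"
  shows "K * (\<Prod>i<N. w 0 (x i)) * \<bar>vdm N x\<bar> * homDensity N p (Suc n) ts xs x
    = (\<Prod>m<Suc n. cfun s (ts m) ^ (k * N)) * C (s * cfun s (ts n))
      * (sgn (vdm N x)
          * (\<Prod>m<n. transDet N q (s * cfun s (ts m) - s * cfun s (ts (Suc m)))
               (\<lambda>i. cfun s (ts m) ^ k * xs m i) (\<lambda>i. cfun s (ts (Suc m)) ^ k * xs (Suc m) i))
          * transDet N q (s - s * cfun s (ts 0)) x (\<lambda>i. cfun s (ts 0) ^ k * xs 0 i)
          * vdm N (\<lambda>i. cfun s (ts n) ^ k * xs n i)
          * (\<Prod>i<N. q (s * cfun s (ts n)) (cfun s (ts n) ^ k * xs n i) 0))"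
proof -
  let ?c = "\<lambda>m. cfun s (ts m)"
  let ?P = "\<Prod>m<n. transDet N p (ts (Suc m) - ts m) (xs (Suc m)) (xs m)"
  let ?Q = "\<Prod>m<n. transDet N q (s * ?c m - s * ?c (Suc m))
              (\<lambda>i. ?c m ^ k * xs m i) (\<lambda>i. ?c (Suc m) ^ k * xs (Suc m) i)"
  let ?L = "transDet N q (s - s * ?c 0) x (\<lambda>i. ?c 0 ^ k * xs 0 i)"
  let ?G = "\<Prod>i<N. w (ts n) (xs n i)"
  let ?E = "real N * (real N - 1) / 2"
  have ts_n: "0 < ts n"
    using increasing_times_pos[OF ts order.refl] .
  then have c_n: "0 < ?c n"
    using cfun_pos s_pos by simp
  have last_vdm: "vdm N (\<lambda>i. ?c n ^ k * xs n i) = (?c n ^ k) powr ?E * vdm N (xs n)"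
    using vdm_scale[of "?c n ^ k" N "xs n"] c_n by simp
  have last_end: "(\<Prod>i<N. q (s * ?c n) (?c n ^ k * xs n i) 0) = phi (?c n) ^ N * ?G"
    using prod_kernel_end[OF ts_n, of N "xs n"] Y by simp
  have "K * (\<Prod>i<N. w 0 (x i)) * \<bar>vdm N x\<bar> * homDensity N p (Suc n) ts xs x
      = K * (\<Prod>i<N. w 0 (x i)) * (\<bar>vdm N x\<bar> * (vdm N (xs n) * ?P * transDet N p (ts 0) (xs 0) x / vdm N x))"
    unfolding homDensity_def by (simp only: diff_Suc_1 mult.assoc)
  also have "\<dots> = K * sgn (vdm N x) * vdm N (xs n) * ((\<Prod>i<N. w 0 (x i)) * transDet N p (ts 0) (xs 0) x * ?P)"
    by (simp only: abs_mult_divide_self ac_simps)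
  also have "\<dots> = (\<Prod>m<n. ?c m ^ (k * N)) * sgn (vdm N x) * vdm N (xs n) * ?G * ?Q * ?L
      * (K * lam (?c n) ^ N)"
    unfolding homogeneous_chain_conjugate[OF ts Y X0] by (simp only: mult_ac)
  also have "\<dots> = (\<Prod>m<n. ?c m ^ (k * N)) * sgn (vdm N x) * vdm N (xs n) * ?G * ?Q * ?L
      * (C (s * ?c n) * ?c n ^ (k * N) * (?c n ^ k) powr ?E * phi (?c n) ^ N)"
    unfolding const[OF c_n] ..
  also have "\<dots> = (\<Prod>m<Suc n. ?c m ^ (k * N)) * C (s * ?c n) * (sgn (vdm N x) * ?Q * ?L
      * vdm N (\<lambda>i. ?c n ^ k * xs n i) * (\<Prod>i<N. q (s * ?c n) (?c n ^ k * xs n i) 0))"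
    unfolding last_vdm last_end by (simp add: mult_ac)
  finally show ?thesis .
qed

theorem mixedHomDensity_eq_timeChangedDensity:
  assumes const: "\<And>c. 0 < c \<Longrightarrow> K * lam c ^ N
      = C (s * c) * c ^ (k * N) * (c ^ k) powr (real N * (real N - 1) / 2) * phi c ^ N"
    and "1 \<le> M" and "0 < ts 0" and "\<forall>m. Suc m < M \<longrightarrow> ts m < ts (Suc m)"
    and "\<forall>m<M. \<forall>i<N. xs m i \<in> Y" and "\<forall>x\<in>W. \<forall>i<N. x i \<in> X0"
  shows "mixedHomDensity N p W (\<lambda>x. K * (\<Prod>i<N. w 0 (x i)) * \<bar>vdm N x\<bar>) M ts xs
       = timeChangedDensity N s k (durDensity N q C W s) M ts xs"
proof -
  obtain n where M: "M = Suc n"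
    using \<open>1 \<le> M\<close> by (cases M) auto
  have ts: "0 < ts 0" "\<forall>m<n. ts m < ts (Suc m)" and Y: "\<forall>m\<le>n. \<forall>i<N. xs m i \<in> Y"
    using assms(3-5) M by auto
  have "mixedHomDensity N p W (\<lambda>x. K * (\<Prod>i<N. w 0 (x i)) * \<bar>vdm N x\<bar>) (Suc n) ts xs
      = (LINT x:W|lebN N. K * (\<Prod>i<N. w 0 (x i)) * \<bar>vdm N x\<bar> * homDensity N p (Suc n) ts xs x)"
    unfolding mixedHomDensity_def ..
  also have "\<dots> = timeChangedDensity N s k (durDensity N q C W s) (Suc n) ts xs"
    unfolding timeChangedDensity_durDensity_forward set_integral_mult_right[symmetric]
    unfolding set_lebesgue_integral_def
    by (rule Bochner_Integration.integral_cong)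
       (use assms(6) in \<open>auto simp: indicator_def weighted_homDensity_eq[OF const ts Y]\<close>)
  finally show ?thesis
    unfolding M .
qed

end

lemma gaussian_exponent_step:
  fixes s t t' y y' :: real
  assumes "0 < s" "0 \<le> t" "t < t'"
  shows "- y\<^sup>2 / (2 * (s + t)) + - (y - y')\<^sup>2 / (2 * (t' - t))
    = - y'\<^sup>2 / (2 * (s + t')) + - (cfun s t' * y' - cfun s t * y)\<^sup>2 / (2 * (cfun s t * cfun s t' * (t' - t)))"
proof -
  have "s + t \<noteq> 0" "s + t' \<noteq> 0" "t' - t \<noteq> 0" using assms by auto
  then show ?thesis
    using assms unfolding cfun_def
    apply (simp add: divide_simps power2_eq_square)
    apply algebra
    done
qed

lemma pBM_step:
  assumes "0 < s" "0 \<le> t" "t < t'"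
  shows "sqrt (cfun s t) * exp (- y\<^sup>2 / (2 * (s + t))) * pBM (t' - t) y' y
    = cfun s t * sqrt (cfun s t') * exp (- y'\<^sup>2 / (2 * (s + t')))
      * pBM (s * cfun s t - s * cfun s t') (cfun s t * y) (cfun s t' * y')"
proof -
  define c c' d where "c = cfun s t" and "c' = cfun s t'" and "d = t' - t"
  have pos: "0 < c" "0 < c'" "0 < d"
    using assms cfun_pos unfolding c_def c'_def d_def by auto
  have tau: "s * c - s * c' = c * c' * d"
    unfolding c_def c'_def d_def using assms by (simp add: cfun_diff)
  have prefactor: "sqrt c / sqrt (2 * pi * d) = c * sqrt c' / sqrt (2 * pi * (c * c' * d))"
    using pos by (simp add: real_sqrt_mult field_simps)
  have "sqrt c * exp (- y\<^sup>2 / (2 * (s + t))) * pBM d y' y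
      = sqrt c / sqrt (2 * pi * d) * exp (- y\<^sup>2 / (2 * (s + t)) + - (y - y')\<^sup>2 / (2 * d))"
    unfolding pBM_def exp_add by simp
  also have "\<dots> = c * sqrt c' / sqrt (2 * pi * (c * c' * d))
      * exp (- y'\<^sup>2 / (2 * (s + t')) + - (c' * y' - c * y)\<^sup>2 / (2 * (c * c' * d)))"
    unfolding prefactor using gaussian_exponent_step[OF assms, of y y']
    by (simp add: c_def c'_def d_def)
  also have "\<dots> = c * sqrt c' * exp (- y'\<^sup>2 / (2 * (s + t'))) * pBM (s * c - s * c') (c * y) (c' * y')"
    unfolding pBM_def exp_add tau by simp
  finally show ?thesis
    unfolding c_def c'_def d_def .
qed

lemma pBM_end:
  assumes "0 < s" "0 < t"
  shows "pBM (s * cfun s t) (cfun s t * y) 0 = 1 / sqrt (2 * pi * (s * cfun s t)) * exp (- y\<^sup>2 / (2 * (s + t)))"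
proof -
  have "(cfun s t * y)\<^sup>2 / (2 * (s * cfun s t)) = cfun s t * y\<^sup>2 / (2 * s)"
    using assms cfun_pos[of s t] by (simp add: power2_eq_square)
  also have "\<dots> = y\<^sup>2 / (2 * (s + t))"
    using assms unfolding cfun_def by simp
  finally have "(cfun s t * y)\<^sup>2 / (2 * (s * cfun s t)) = y\<^sup>2 / (2 * (s + t))" .
  then show ?thesis
    unfolding pBM_def by simp
qed

lemma gaussian_time_inversion:
  assumes "0 < s"
  shows "time_inversion s 1 pBM pBM (\<lambda>t y. exp (- y\<^sup>2 / (2 * (s + t)))) sqrt
           (\<lambda>c. 1 / sqrt (2 * pi * (s * c))) UNIV UNIV"
proof
  fix t t' y y' :: real
  assume "0 < t" "t < t'"
  then show "sqrt (cfun s t) * exp (- y\<^sup>2 / (2 * (s + t))) * pBM (t' - t) y' y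
    = cfun s t ^ 1 * sqrt (cfun s t') * exp (- y'\<^sup>2 / (2 * (s + t')))
      * pBM (s * cfun s t - s * cfun s t') (cfun s t ^ 1 * y) (cfun s t' ^ 1 * y')"
    using pBM_step[OF assms] by simp
next
  txt \<open>The start identity is the step identity at \<open>t = 0\<close>, where \<open>cfun s 0 = 1\<close>.\<close>
  fix t x y :: real
  assume "0 < t"
  then show "exp (- x\<^sup>2 / (2 * (s + 0))) * pBM t y x
    = sqrt (cfun s t) * exp (- y\<^sup>2 / (2 * (s + t))) * pBM (s - s * cfun s t) x (cfun s t ^ 1 * y)"
    using pBM_step[OF assms order.refl, of t x y] by (simp add: cfun_zero assms)
next
  fix t y :: real
  assume "0 < t"
  then show "pBM (s * cfun s t) (cfun s t ^ 1 * y) 0 = 1 / sqrt (2 * pi * (s * cfun s t)) * exp (- y\<^sup>2 / (2 * (s + t)))"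
    using pBM_end[OF assms] by simp
qed (rule assms)

lemma prod_Gamma_half_succ:
  "(\<Prod>j=1..N. Gamma (real j / 2 + 1) / Gamma (3 / 2)) = fact N * (\<Prod>j=1..N. Gamma (real j / 2)) / sqrt pi ^ N"
proof (induction N)
  case (Suc n)
  have "Gamma (3 / 2 :: real) = Gamma (1 / 2 + 1)"
    by simp
  also have "\<dots> = 1 / 2 * Gamma (1 / 2)"
    by (rule Gamma_plus1) (auto dest: nonpos_Ints_nonpos)
  finally have Gamma_three_halves: "Gamma (3 / 2 :: real) = sqrt pi / 2"
    by (simp add: Gamma_one_half_real)
  have Gamma_succ: "Gamma (real (Suc n) / 2 + 1) = real (Suc n) / 2 * Gamma (real (Suc n) / 2)"
    by (rule Gamma_plus1) (auto dest: nonpos_Ints_nonpos)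
  have "(\<Prod>j=1..Suc n. Gamma (real j / 2 + 1) / Gamma (3 / 2))
      = (\<Prod>j=1..n. Gamma (real j / 2 + 1) / Gamma (3 / 2)) * (Gamma (real (Suc n) / 2 + 1) / Gamma (3 / 2))"
    by (simp add: prod.cl_ivl_Suc)
  also have "\<dots> = fact n * (\<Prod>j=1..n. Gamma (real j / 2)) / sqrt pi ^ n
      * (real (Suc n) * Gamma (real (Suc n) / 2) / sqrt pi)"
    unfolding Suc.IH by (simp only: Gamma_succ Gamma_three_halves) simp
  also have "\<dots> = fact (Suc n) * (\<Prod>j=1..Suc n. Gamma (real j / 2)) / sqrt pi ^ Suc n"
    by (simp add: prod.cl_ivl_Suc field_simps)
  finally show ?case .
qed simp

lemma CGOE_eq: "CGOE N = 2 powr (real N / 2) * (\<Prod>j=1..N. Gamma (real j / 2))"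
proof -
  have "sqrt pi ^ N = pi powr (real N / 2)"
    by (simp add: powr_half_sqrt[symmetric] powr_realpow[symmetric] powr_powr)
  then show ?thesis
    unfolding CGOE_def prod_Gamma_half_succ by (simp add: powr_mult)
qed

lemma GOE_normalization:
  assumes "0 < s" "0 < c"
  shows "sqrt s powr (- (real N * (real N + 1) / 2)) / CGOE N * sqrt c ^ N
    = CBM N s (s * c) * c ^ N * c powr (real N * (real N - 1) / 2) * (1 / sqrt (2 * pi * (s * c))) ^ N"
    (is "?lhs = ?rhs")
proof -
  define G where "G = (\<Prod>j=1..N. Gamma (real j / 2))"
  have G: "0 < G"
    unfolding G_def by (rule prod_pos) auto
  have "ln ?lhs = - (real N * (real N + 1) / 2) * (ln s / 2) - (real N / 2 * ln 2 + ln G) + real N * (ln c / 2)"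
    using assms G unfolding CGOE_eq G_def[symmetric]
    by (simp add: ln_mult ln_div ln_powr ln_realpow ln_sqrt)
  also have "\<dots> = real N / 2 * ln pi - ln G + real N * (real N - 1) / 4 * ln s
      - real N * (real N - 1) / 2 * (ln s + ln c) + real N * ln c + real N * (real N - 1) / 2 * ln c
      - real N * ((ln 2 + ln pi + ln s + ln c) / 2)"
    by (simp add: field_simps)
  also have "\<dots> = ln ?rhs"
    using assms G unfolding CBM_def G_def[symmetric]
    by (simp add: ln_mult ln_div ln_powr ln_realpow ln_sqrt)
  finally show ?thesis
    using assms G unfolding CGOE_eq CBM_def G_def[symmetric] by (simp add: ln_inj_iff)
qed

lemma bessel_exponent_step:
  fixes s t t' y y' :: real
  assumes "0 < s" "0 \<le> t" "t < t'"
  shows "- y / (2 * (s + t)) + - (y + y') / (2 * (t' - t))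
    = - y' / (2 * (s + t')) + - ((cfun s t')\<^sup>2 * y' + (cfun s t)\<^sup>2 * y) / (2 * (cfun s t * cfun s t' * (t' - t)))"
proof -
  have "s + t \<noteq> 0" "s + t' \<noteq> 0" "t' - t \<noteq> 0" using assms by auto
  then show ?thesis
    using assms unfolding cfun_def
    apply (simp add: divide_simps power2_eq_square)
    apply algebra
    done
qed

lemma bessel_prefactor_step:
  fixes c c' d y y' r :: real
  assumes "0 < c" "0 < c'" "0 < d" "0 < y" "0 < y'"
  shows "c powr (1 + 2 * r) * y powr (\<nu> / 2 + r) * ((y' / y) powr (\<nu> / 2) / (2 * d))
    = c\<^sup>2 * c' powr (1 + 2 * r) * y' powr (\<nu> / 2 + r) * ((c\<^sup>2 * y / (c'\<^sup>2 * y')) powr r / (2 * (c * c' * d)))"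
proof -
  have split: "x powr (1 + 2 * r) = x * (x powr r)\<^sup>2" if "0 < x" for x :: real
  proof -
    have "(x powr r)\<^sup>2 = x powr (2 * r)"
      by (simp add: power2_eq_square powr_add[symmetric])
    then show ?thesis
      using that by (simp add: powr_add)
  qed
  have ratio: "(c\<^sup>2 * y / (c'\<^sup>2 * y')) powr r = (c powr r)\<^sup>2 * y powr r / ((c' powr r)\<^sup>2 * y' powr r)"
    using assms by (simp add: powr_mult powr_divide power2_eq_square)
  have quotient: "(y' / y) powr (\<nu> / 2) = y' powr (\<nu> / 2) / y powr (\<nu> / 2)"
    using assms by (simp add: powr_divide)
  show ?thesis
    unfolding split[OF assms(1)] split[OF assms(2)] ratio quotient powr_add[of _ "\<nu> / 2" r]
    using assms by (simp add: field_simps power2_eq_square)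
qed

lemma pBES_step:
  assumes "0 < s" "0 \<le> t" "t < t'" "0 < y" "0 < y'" "\<kappa> = 2 * (\<nu> - a)"
  shows "cfun s t powr (1 + \<nu> - \<kappa>) * (y powr a * exp (- y / (2 * (s + t)))) * pBES \<nu> (t' - t) y' y
    = cfun s t ^ 2 * cfun s t' powr (1 + \<nu> - \<kappa>) * (y' powr a * exp (- y' / (2 * (s + t'))))
      * pMEA \<nu> \<kappa> (s * cfun s t - s * cfun s t') (cfun s t ^ 2 * y) (cfun s t' ^ 2 * y')"
proof -
  define c c' d r where "c = cfun s t" and "c' = cfun s t'" and "d = t' - t" and "r = (\<nu> - \<kappa>) / 2"
  have pos: "0 < c" "0 < c'" "0 < d"
    using assms cfun_pos unfolding c_def c'_def d_def by auto
  have tau: "s * c - s * c' = c * c' * d"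
    unfolding c_def c'_def d_def using assms by (simp add: cfun_diff)
  have exponents: "1 + \<nu> - \<kappa> = 1 + 2 * r" "a = \<nu> / 2 + r"
    using assms(6) unfolding r_def by (simp_all add: field_simps)
  have bessel_arg: "sqrt (c'\<^sup>2 * y' * (c\<^sup>2 * y)) / (c * c' * d) = sqrt (y * y') / d"
    using pos assms by (simp add: real_sqrt_mult ac_simps)
  have exponent: "- y / (2 * (s + t)) + - (y + y') / (2 * d)
      = - y' / (2 * (s + t')) + - (c'\<^sup>2 * y' + c\<^sup>2 * y) / (2 * (c * c' * d))"
    using bessel_exponent_step[OF assms(1-3)] unfolding c_def c'_def d_def .
  define B where "B = besselI \<nu> (sqrt (y * y') / d)"
  have "c powr (1 + \<nu> - \<kappa>) * (y powr a * exp (- y / (2 * (s + t)))) * pBES \<nu> d y' y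
      = c powr (1 + 2 * r) * y powr (\<nu> / 2 + r) * ((y' / y) powr (\<nu> / 2) / (2 * d))
        * exp (- y / (2 * (s + t)) + - (y + y') / (2 * d)) * B"
    using assms unfolding pBES_def exponents B_def exp_add by simp
  also have "\<dots> = c\<^sup>2 * c' powr (1 + 2 * r) * y' powr (\<nu> / 2 + r)
        * ((c\<^sup>2 * y / (c'\<^sup>2 * y')) powr r / (2 * (c * c' * d)))
        * exp (- y' / (2 * (s + t')) + - (c'\<^sup>2 * y' + c\<^sup>2 * y) / (2 * (c * c' * d))) * B"
    unfolding bessel_prefactor_step[OF pos assms(4,5)] exponent ..
  also have "\<dots> = c ^ 2 * c' powr (1 + \<nu> - \<kappa>) * (y' powr a * exp (- y' / (2 * (s + t'))))
      * pMEA \<nu> \<kappa> (s * c - s * c') (c ^ 2 * y) (c' ^ 2 * y')"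
    using pos assms unfolding pMEA_def tau bessel_arg exponents B_def r_def exp_add by simp
  finally show ?thesis
    unfolding c_def c'_def d_def .
qed

lemma pMEA_end:
  assumes "0 < s" "0 < t" "0 < y" "\<kappa> = 2 * (\<nu> - a)"
  shows "pMEA \<nu> \<kappa> (s * cfun s t) (cfun s t ^ 2 * y) 0
    = cfun s t powr (2 * a) / ((2 * (s * cfun s t)) powr (\<nu> + 1) * Gamma (\<nu> + 1))
      * (y powr a * exp (- y / (2 * (s + t))))"
proof -
  define c where "c = cfun s t"
  have c: "0 < c"
    unfolding c_def using assms cfun_pos by simp
  have "c\<^sup>2 * y / (2 * (s * c)) = c * y / (2 * s)"
    using c assms by (simp add: power2_eq_square)
  also have "\<dots> = y / (2 * (s + t))"
    using assms unfolding c_def cfun_def by simp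
  finally have exponent: "c\<^sup>2 * y / (2 * (s * c)) = y / (2 * (s + t))" .
  have "\<nu> - \<kappa> / 2 = a"
    using assms by (simp add: field_simps)
  then have "(c\<^sup>2 * y) powr (\<nu> - \<kappa> / 2) = (c powr a)\<^sup>2 * y powr a"
    using assms c by (simp add: powr_mult power2_eq_square)
  also have "(c powr a)\<^sup>2 = c powr (2 * a)"
    by (simp add: power2_eq_square powr_add[symmetric])
  finally have power: "(c\<^sup>2 * y) powr (\<nu> - \<kappa> / 2) = c powr (2 * a) * y powr a" .
  show ?thesis
    unfolding pMEA_def c_def[symmetric] using exponent power by simp
qed

lemma bessel_time_inversion:
  assumes "0 < s" "\<kappa> = 2 * (\<nu> - a)"
  shows "time_inversion s 2 (pBES \<nu>) (pMEA \<nu> \<kappa>) (\<lambda>t y. y powr a * exp (- y / (2 * (s + t))))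
           (\<lambda>c. c powr (1 + \<nu> - \<kappa>)) (\<lambda>c. c powr (2 * a) / ((2 * (s * c)) powr (\<nu> + 1) * Gamma (\<nu> + 1)))
           {0<..} {0..}"
proof
  fix t t' y y' :: real
  assume "0 < t" "t < t'" "y \<in> {0<..}" "y' \<in> {0<..}"
  then show "cfun s t powr (1 + \<nu> - \<kappa>) * (y powr a * exp (- y / (2 * (s + t)))) * pBES \<nu> (t' - t) y' y
    = cfun s t ^ 2 * cfun s t' powr (1 + \<nu> - \<kappa>) * (y' powr a * exp (- y' / (2 * (s + t'))))
      * pMEA \<nu> \<kappa> (s * cfun s t - s * cfun s t') (cfun s t ^ 2 * y) (cfun s t' ^ 2 * y')"
    using pBES_step[OF assms(1) _ _ _ _ assms(2)] by simp
next
  fix t x y :: real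
  assume t: "0 < t" and x: "x \<in> {0..}" and y: "y \<in> {0<..}"
  show "x powr a * exp (- x / (2 * (s + 0))) * pBES \<nu> t y x
    = cfun s t powr (1 + \<nu> - \<kappa>) * (y powr a * exp (- y / (2 * (s + t))))
      * pMEA \<nu> \<kappa> (s - s * cfun s t) x (cfun s t ^ 2 * y)"
  proof (cases "x = 0")
    case True
    txt \<open>Both sides vanish, by the convention \<open>0 powr a = 0\<close>.\<close>
    then show ?thesis
      using assms t y cfun_pos[of s t] unfolding pMEA_def by simp
  next
    case False
    then show ?thesis
      using pBES_step[OF assms(1) order.refl t, of x y] x y assms by (simp add: cfun_zero)
  qed
next
  fix t y :: real
  assume "0 < t" "y \<in> {0<..}"
  then show "pMEA \<nu> \<kappa> (s * cfun s t) (cfun s t ^ 2 * y) 0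
    = cfun s t powr (2 * a) / ((2 * (s * cfun s t)) powr (\<nu> + 1) * Gamma (\<nu> + 1))
      * (y powr a * exp (- y / (2 * (s + t))))"
    using pMEA_end[OF assms(1) _ _ assms(2)] by simp
qed (rule assms)

lemma CLOE_eq:
  "CLOE N a = 2 powr (real N * ((real N - 1) + 2 * (a + 1)) / 2)
    * (\<Prod>j=1..N. Gamma (real j / 2) * Gamma (real j / 2 + a + 1 / 2)) / sqrt pi ^ N"
proof -
  have "(\<Prod>j=1..N. Gamma (real j / 2 + 1) * Gamma (real j / 2 + a + 1 / 2) / Gamma (3 / 2))
      = (\<Prod>j=1..N. Gamma (real j / 2 + 1) / Gamma (3 / 2)) * (\<Prod>j=1..N. Gamma (real j / 2 + a + 1 / 2))"
    by (simp add: prod.distrib[symmetric])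
  then show ?thesis
    unfolding CLOE_def prod_Gamma_half_succ by (simp add: prod.distrib)
qed

lemma LOE_normalization:
  assumes "0 < s" "0 < c" "-1 < \<nu>" "-1 < a" "\<kappa> = 2 * (\<nu> - a)"
  shows "sqrt s powr (- (real N * ((real N - 1) + 2 * (a + 1)))) / CLOE N a * (c powr (1 + \<nu> - \<kappa>)) ^ N
    = CMEA N \<nu> \<kappa> s (s * c) * c ^ (2 * N) * (c ^ 2) powr (real N * (real N - 1) / 2)
      * (c powr (2 * a) / ((2 * (s * c)) powr (\<nu> + 1) * Gamma (\<nu> + 1))) ^ N"
    (is "?lhs = ?rhs")
proof -
  define G where "G = (\<Prod>j=1..N. Gamma (real j / 2) * Gamma (real j / 2 + a + 1 / 2))"
  have G: "0 < G"
    unfolding G_def by (rule prod_pos) (use assms(4) in \<open>auto intro!: Gamma_real_pos\<close>)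
  have Gamma_pos: "0 < Gamma (\<nu> + 1)"
    using assms(3) by simp
  then have Gamma_nz: "Gamma (\<nu> + 1) \<noteq> 0"
    by simp
  have CMEA_prod: "(\<Prod>j=1..N. Gamma (\<nu> + 1) * Gamma (1 / 2)
      / (Gamma (real j / 2) * Gamma ((real j + 1 + 2 * \<nu> - \<kappa>) / 2))) = Gamma (\<nu> + 1) ^ N * sqrt pi ^ N / G"
  proof -
    have "(real j + 1 + 2 * \<nu> - \<kappa>) / 2 = real j / 2 + a + 1 / 2" for j
      using assms(5) by (simp add: field_simps)
    then have "(\<Prod>j=1..N. Gamma (real j / 2) * Gamma ((real j + 1 + 2 * \<nu> - \<kappa>) / 2)) = G"
      unfolding G_def by (simp only:)
    then show ?thesis
      unfolding prod_dividef by (simp add: Gamma_one_half_real power_mult_distrib)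
  qed
  have "ln ?lhs = - (real N * ((real N - 1) + 2 * (a + 1))) * (ln s / 2)
      - (real N * ((real N - 1) + 2 * (a + 1)) / 2 * ln 2 + ln G - real N * ln pi / 2)
      + real N * ((1 + \<nu> - \<kappa>) * ln c)"
    using assms G unfolding CLOE_eq G_def[symmetric]
    by (simp add: ln_mult ln_div ln_powr ln_realpow ln_sqrt)
  also have "\<dots> = (real N + \<kappa> - 1) * real N / 2 * ln s - (real N - 1) * real N * (ln s + ln c)
      - real N * (real N - \<kappa> - 1) / 2 * ln 2 + (real N * ln (Gamma (\<nu> + 1)) + real N * ln pi / 2 - ln G)
      + real (2 * N) * ln c + real N * (real N - 1) / 2 * (2 * ln c)
      + real N * (2 * a * ln c - ((\<nu> + 1) * (ln 2 + ln s + ln c) + ln (Gamma (\<nu> + 1))))"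
    unfolding assms(5) by (simp add: field_simps)
  also have "\<dots> = ln ?rhs"
    using assms G Gamma_pos Gamma_nz unfolding CMEA_def CMEA_prod
    by (simp add: ln_mult ln_div ln_powr ln_realpow ln_sqrt)
  finally show ?thesis
    using assms G Gamma_pos Gamma_nz unfolding CLOE_eq CMEA_def CMEA_prod G_def[symmetric] by (simp add: ln_inj_iff)
qed

lemma chamber_first_le:
  assumes "\<forall>j. Suc j < N \<longrightarrow> x j < x (Suc j)" "i < N"
  shows "x 0 \<le> (x i :: real)"
  using assms(2)
proof (induction i)
  case (Suc i)
  then have "x 0 \<le> x i"
    by simp
  also have "x i < x (Suc i)"
    using assms(1) Suc.prems by simp
  finally show ?case
    by simp
qed simp

lemma weylPos_coord_pos:
  assumes "x \<in> weylPos N" "i < N"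
  shows "0 < x i"
proof -
  have "0 < x 0" "x 0 \<le> x i"
    using assms chamber_first_le[of N x i] by (simp_all add: weylPos_def)
  then show ?thesis
    by simp
qed

lemma weylPlus_coord_nonneg:
  assumes "x \<in> weylPlus N" "i < N"
  shows "0 \<le> x i"
proof -
  have "0 \<le> x 0" "x 0 \<le> x i"
    using assms chamber_first_le[of N x i] by (simp_all add: weylPlus_def)
  then show ?thesis
    by simp
qed

lemma noncolliding_BM_GOE_time_inversion:
  assumes "0 < \<sigma>2" "1 \<le> M" "0 < ts 0" "\<forall>m. Suc m < M \<longrightarrow> ts m < ts (Suc m)"
  shows "mixedHomDensity N pBM (weylA N) (muGOE N \<sigma>2) M ts xs
    = timeChangedDensity N \<sigma>2 1 (durDensity N pBM (CBM N \<sigma>2) (weylA N) \<sigma>2) M ts xs"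
proof -
  interpret time_inversion \<sigma>2 1 pBM pBM "\<lambda>t y. exp (- y\<^sup>2 / (2 * (\<sigma>2 + t)))" sqrt
      "\<lambda>c. 1 / sqrt (2 * pi * (\<sigma>2 * c))" UNIV UNIV
    using assms(1) by (rule gaussian_time_inversion)
  have "muGOE N \<sigma>2 = (\<lambda>x. sqrt \<sigma>2 powr (- (real N * (real N + 1) / 2)) / CGOE N
      * (\<Prod>i<N. exp (- (x i)\<^sup>2 / (2 * (\<sigma>2 + 0)))) * \<bar>vdm N x\<bar>)"
    unfolding muGOE_def sqnorm_def
    by (simp add: exp_sum[symmetric] sum_divide_distrib sum_negf fun_eq_iff)
  then show ?thesis
    by (simp only:) (rule mixedHomDensity_eq_timeChangedDensity,
        use GOE_normalization[OF assms(1)] assms(2-4) in auto)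
qed

lemma noncolliding_BESQ_LOE_time_inversion:
  assumes "0 < \<sigma>2" "-1 < \<nu>" "-1 < a" "\<kappa> = 2 * (\<nu> - a)"
    and "1 \<le> M" "0 < ts 0" "\<forall>m. Suc m < M \<longrightarrow> ts m < ts (Suc m)" "\<forall>m<M. xs m \<in> weylPos N"
  shows "mixedHomDensity N (pBES \<nu>) (weylPlus N) (muLOE N \<sigma>2 a) M ts xs
    = timeChangedDensity N \<sigma>2 2 (durDensity N (pMEA \<nu> \<kappa>) (CMEA N \<nu> \<kappa> \<sigma>2) (weylPlus N) \<sigma>2) M ts xs"
proof -
  interpret time_inversion \<sigma>2 2 "pBES \<nu>" "pMEA \<nu> \<kappa>" "\<lambda>t y. y powr a * exp (- y / (2 * (\<sigma>2 + t)))"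
      "\<lambda>c. c powr (1 + \<nu> - \<kappa>)" "\<lambda>c. c powr (2 * a) / ((2 * (\<sigma>2 * c)) powr (\<nu> + 1) * Gamma (\<nu> + 1))"
      "{0<..}" "{0..}"
    using assms(1,4) by (rule bessel_time_inversion)
  have "muLOE N \<sigma>2 a = (\<lambda>x. sqrt \<sigma>2 powr (- (real N * ((real N - 1) + 2 * (a + 1)))) / CLOE N a
      * (\<Prod>i<N. x i powr a * exp (- x i / (2 * (\<sigma>2 + 0)))) * \<bar>vdm N x\<bar>)"
    unfolding muLOE_def by simp
  then show ?thesis
    by (simp only:) (rule mixedHomDensity_eq_timeChangedDensity,
        use LOE_normalization[OF assms(1) _ assms(2-4)] assms(5-8)
          weylPos_coord_pos weylPlus_coord_nonneg in auto)
qed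

theorem lemma2p1:
  fixes N :: nat and \<sigma>2 :: real
  assumes "N \<ge> 1" and "\<sigma>2 > 0"
  shows
   "(\<forall>M ts xs. M \<ge> 1 \<and> 0 < ts 0 \<and> (\<forall>m. Suc m < M \<longrightarrow> ts m < ts (Suc m))
        \<and> (\<forall>m<M. xs m \<in> weylA N) \<longrightarrow>
      mixedHomDensity N pBM (weylA N) (muGOE N \<sigma>2) M ts xs
      = timeChangedDensity N \<sigma>2 1 (durDensity N pBM (CBM N \<sigma>2) (weylA N) \<sigma>2) M ts xs)
    \<and>
    (\<forall>\<nu> a \<kappa>. \<nu> > -1 \<and> -1 < a \<and> a \<le> \<nu> \<and> \<kappa> = 2 * (\<nu> - a) \<longrightarrow>
     (\<forall>M ts xs. M \<ge> 1 \<and> 0 < ts 0 \<and> (\<forall>m. Suc m < M \<longrightarrow> ts m < ts (Suc m))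
        \<and> (\<forall>m<M. xs m \<in> weylPos N) \<longrightarrow>
      mixedHomDensity N (pBES \<nu>) (weylPlus N) (muLOE N \<sigma>2 a) M ts xs
      = timeChangedDensity N \<sigma>2 2
          (durDensity N (pMEA \<nu> \<kappa>) (CMEA N \<nu> \<kappa> \<sigma>2) (weylPlus N) \<sigma>2) M ts xs))"
  using noncolliding_BM_GOE_time_inversion[OF assms(2)] noncolliding_BESQ_LOE_time_inversion[OF assms(2)]
  by auto

end
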